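(* Let $n\ge 3$. The cycle $C_n$ is pseudo-Gorenstein$^{*}$ if and only if $n\equiv 1,2,5,10 \pmod{12}$.
   Context: For a finite simple graph $G$ on vertex set $[N]$, let $S=K[x_1,\dots,x_N]$ ($K$ a field) and $I(G)$ the edge ideal generated by $x_ix_j$, $\{i,j\}\in E(G)$. Let $\alpha(G)$ be the independence number (equal to $\dim S/I(G)$). Write the Hilbert series of $S/I(G)$ uniquely as $(h_0+\dots+h_st^s)/(1-t)^{\alpha(G)}$ with $h_s\ne 0$; the numerator is the $h$-polynomial $h_G(t)$, and $\mathfrak a(G)=s-\alpha(G)$. $G$ is pseudo-Gorenstein$^{*}$ if $h_s=1$ and $\mathfrak a(G)=0$. $C_n$ denotes the cycle on $n$ vertices. *)

theory Defs
  imports "HOL-Computational_Algebra.Computational_Algebra"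
begin

text \<open>Graphs on vertex set {0..<N} given by an edge relation E (assumed symmetric
  and irreflexive where relevant).  Monomials of S = K[x_0..x_{N-1}] are exponent
  vectors a :: nat => nat supported on {0..<N}.\<close>

definition independent :: "nat \<Rightarrow> (nat \<Rightarrow> nat \<Rightarrow> bool) \<Rightarrow> nat set \<Rightarrow> bool" where
  "independent N E A \<longleftrightarrow> A \<subseteq> {0..<N} \<and> (\<forall>i\<in>A. \<forall>j\<in>A. \<not> E i j)"

definition indep_num :: "nat \<Rightarrow> (nat \<Rightarrow> nat \<Rightarrow> bool) \<Rightarrow> nat" where
  "indep_num N E = Max (card ` {A. independent N E A})"

text \<open>Standard monomials of degree k for the edge ideal I(G): monomials not divisible
  by any x_i x_j with {i,j} an edge.  They form a K-basis of (S/I(G))_k, so the count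
  is the Hilbert function of S/I(G) (for any field K).\<close>

definition std_monomials :: "nat \<Rightarrow> (nat \<Rightarrow> nat \<Rightarrow> bool) \<Rightarrow> nat \<Rightarrow> (nat \<Rightarrow> nat) set" where
  "std_monomials N E k = {a. (\<forall>i. N \<le> i \<longrightarrow> a i = 0) \<and> (\<Sum>i<N. a i) = k \<and>
      (\<forall>i<N. \<forall>j<N. E i j \<longrightarrow> a i = 0 \<or> a j = 0)}"

definition hilbert_fun :: "nat \<Rightarrow> (nat \<Rightarrow> nat \<Rightarrow> bool) \<Rightarrow> nat \<Rightarrow> nat" where
  "hilbert_fun N E k = card (std_monomials N E k)"

definition hilbert_series :: "nat \<Rightarrow> (nat \<Rightarrow> nat \<Rightarrow> bool) \<Rightarrow> int fps" where
  "hilbert_series N E = Abs_fps (\<lambda>k. int (hilbert_fun N E k))"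

definition is_h_poly :: "nat \<Rightarrow> (nat \<Rightarrow> nat \<Rightarrow> bool) \<Rightarrow> int poly \<Rightarrow> bool" where
  "is_h_poly N E h \<longleftrightarrow>
     fps_of_poly h = hilbert_series N E * (1 - fps_X) ^ indep_num N E"

definition pseudo_gorenstein_star :: "nat \<Rightarrow> (nat \<Rightarrow> nat \<Rightarrow> bool) \<Rightarrow> bool" where
  "pseudo_gorenstein_star N E \<longleftrightarrow>
     (\<exists>h. is_h_poly N E h \<and> lead_coeff h = 1 \<and> int (degree h) - int (indep_num N E) = 0)"

definition cycle_edge :: "nat \<Rightarrow> nat \<Rightarrow> nat \<Rightarrow> bool" where
  "cycle_edge n i j \<longleftrightarrow> i < n \<and> j < n \<and> (j = Suc i mod n \<or> i = Suc j mod n)"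

end

theory Submission
  imports Defs
begin

(* Grouping the standard monomials of S/I(G) by their support, which is an independent set F,
   gives HS(t) = sum_F (t/(1-t))^|F|, hence h(t) = sum_F t^|F| (1-t)^(alpha-|F|). This polynomial
   has degree at most alpha, and its coefficient of t^alpha is (-1)^alpha I_G(-1), where I_G is the
   independence polynomial. So G is pseudo-Gorenstein* iff (-1)^alpha I_G(-1) = 1.

   For the cycle on m + 3 vertices, alpha = (m + 3) div 2, and splitting on whether the last vertex
   is used gives I(-1) = p(m + 2) - p(m), where p(k) is the value at -1 for the path on k vertices.
   Since p(k + 2) = p(k + 1) - p(k), p has period 6, so the sign condition has period 12 in m,
   and checking one period leaves the residues 1, 2, 5, 10. *)

definition monomials_with_support :: "nat set \<Rightarrow> nat \<Rightarrow> (nat \<Rightarrow> nat) set" where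
  "monomials_with_support F k = {a. {i. a i \<noteq> 0} = F \<and> sum a F = k}"

lemma finite_monomials_with_support:
  assumes "finite F" shows "finite (monomials_with_support F k)"
proof -
  have "monomials_with_support F k \<subseteq> (\<lambda>f i. if i \<in> F then f i else 0) ` (PiE F (\<lambda>_. {0..k}))"
  proof
    fix a assume "a \<in> monomials_with_support F k"
    then have supp: "{i. a i \<noteq> 0} = F" and deg: "sum a F = k"
      by (auto simp: monomials_with_support_def)
    have "restrict a F \<in> PiE F (\<lambda>_. {0..k})"
      using deg assms by (auto intro: member_le_sum)
    moreover have "a = (\<lambda>i. if i \<in> F then restrict a F i else 0)"
      using supp by auto
    ultimately show "a \<in> (\<lambda>f i. if i \<in> F then f i else 0) ` (PiE F (\<lambda>_. {0..k}))" by blast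
  qed
  then show ?thesis
    using assms by (meson finite_PiE finite_atLeastAtMost finite_imageI finite_subset)
qed

lemma sum_fun_upd_notin: "x \<notin> F \<Longrightarrow> sum (a(x := v)) F = sum a F"
  by (intro sum.cong) auto

lemma monomials_with_support_insert_Suc:
  assumes "finite F" "x \<notin> F"
  shows "(\<lambda>a. a(x := a x - 1)) ` monomials_with_support (insert x F) (Suc k)
       = monomials_with_support F k \<union> monomials_with_support (insert x F) k"
proof (intro equalityI subsetI)
  fix b assume "b \<in> (\<lambda>a. a(x := a x - 1)) ` monomials_with_support (insert x F) (Suc k)"
  then obtain a where a: "a \<in> monomials_with_support (insert x F) (Suc k)"
    and b: "b = a(x := a x - 1)" by blast
  then have supp: "{i. a i \<noteq> 0} = insert x F" and deg: "a x + sum a F = Suc k"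
    using assms by (auto simp: monomials_with_support_def)
  have sum_b: "sum b F = sum a F"
    unfolding b by (rule sum_fun_upd_notin) fact
  show "b \<in> monomials_with_support F k \<union> monomials_with_support (insert x F) k"
  proof (cases "a x = 1")
    case True
    then have "{i. b i \<noteq> 0} = F" using supp assms by (auto simp: b)
    then show ?thesis using deg True sum_b by (simp add: monomials_with_support_def)
  next
    case False
    moreover have "a x \<noteq> 0" using supp by auto
    ultimately have "{i. b i \<noteq> 0} = insert x F" using supp by (auto simp: b)
    moreover have "sum b (insert x F) = k"
      using deg \<open>a x \<noteq> 0\<close> assms sum_b by (simp add: b)
    ultimately show ?thesis by (simp add: monomials_with_support_def)
  qed
next
  fix b assume b: "b \<in> monomials_with_support F k \<union> monomials_with_support (insert x F) k"
  have "sum b F = sum (b(x := Suc (b x))) F"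
    by (rule sym, rule sum_fun_upd_notin) fact
  moreover have "sum b (insert x F) = b x + sum b F" using assms by simp
  ultimately have "b(x := Suc (b x)) \<in> monomials_with_support (insert x F) (Suc k)"
    using b assms by (auto simp: monomials_with_support_def)
  moreover have "b = (\<lambda>a. a(x := a x - 1)) (b(x := Suc (b x)))" by simp
  ultimately show "b \<in> (\<lambda>a. a(x := a x - 1)) ` monomials_with_support (insert x F) (Suc k)"
    by blast
qed

lemma card_monomials_with_support_insert_Suc:
  assumes "finite F" "x \<notin> F"
  shows "card (monomials_with_support (insert x F) (Suc k))
       = card (monomials_with_support F k) + card (monomials_with_support (insert x F) k)"
proof -
  have "inj_on (\<lambda>a. a(x := a x - 1)) (monomials_with_support (insert x F) (Suc k))"
  proof (rule inj_onI, rule ext)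
    fix a b y assume "a \<in> monomials_with_support (insert x F) (Suc k)"
      "b \<in> monomials_with_support (insert x F) (Suc k)"
      and eq: "a(x := a x - 1) = b(x := b x - 1)"
    then have "a x \<noteq> 0" "b x \<noteq> 0" by (auto simp: monomials_with_support_def)
    then show "a y = b y"
      using fun_cong[OF eq, of x] fun_cong[OF eq, of y] by (cases "y = x") auto
  qed
  then have "card (monomials_with_support (insert x F) (Suc k))
      = card (monomials_with_support F k \<union> monomials_with_support (insert x F) k)"
    by (simp flip: monomials_with_support_insert_Suc[OF assms] add: card_image)
  moreover have "monomials_with_support F k \<inter> monomials_with_support (insert x F) k = {}"
    using assms by (auto simp: monomials_with_support_def)
  ultimately show ?thesis
    using assms by (simp add: card_Un_disjoint finite_monomials_with_support)
qed

definition support_series :: "nat set \<Rightarrow> int fps" where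
  "support_series F = Abs_fps (\<lambda>k. int (card (monomials_with_support F k)))"

lemma support_series_insert:
  assumes "finite F" "x \<notin> F"
  shows "support_series (insert x F) * (1 - fps_X) = support_series F * fps_X"
proof (rule fps_ext)
  fix k
  have "monomials_with_support (insert x F) 0 = {}"
  proof (intro equals0I)
    fix a assume "a \<in> monomials_with_support (insert x F) 0"
    then have "a x \<noteq> 0" "sum a (insert x F) = 0" by (auto simp: monomials_with_support_def)
    moreover have "a x \<le> sum a (insert x F)" using assms by (intro member_le_sum) auto
    ultimately show False by simp
  qed
  then show "(support_series (insert x F) * (1 - fps_X)) $ k = (support_series F * fps_X) $ k"
    using card_monomials_with_support_insert_Suc[OF assms]
    by (cases k) (simp_all add: support_series_def right_diff_distrib)
qed

lemma support_series_mult_power: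
  assumes "finite F"
  shows "support_series F * (1 - fps_X) ^ card F = fps_X ^ card F"
  using assms
proof (induction F rule: finite_induct)
  case empty
  have "monomials_with_support {} k = (if k = 0 then {\<lambda>_. 0} else {})" for k
    by (auto simp: monomials_with_support_def)
  then have "support_series {} = 1"
    by (intro fps_ext) (simp add: support_series_def)
  then show ?case by simp
next
  case (insert x F)
  have "support_series (insert x F) * (1 - fps_X) ^ card (insert x F)
      = (support_series (insert x F) * (1 - fps_X)) * (1 - fps_X) ^ card F"
    using insert.hyps by (simp add: algebra_simps)
  also have "\<dots> = (support_series F * fps_X) * (1 - fps_X) ^ card F"
    by (simp only: support_series_insert[OF insert.hyps])
  also have "\<dots> = (support_series F * (1 - fps_X) ^ card F) * fps_X"
    by (simp only: mult_ac)
  finally show ?case using insert by simp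
qed

lemma finite_independent_sets: "finite {F. independent N E F}"
  by (rule finite_subset[of _ "Pow {0..<N}"]) (auto simp: independent_def)

lemma finite_independent: "independent N E F \<Longrightarrow> finite F"
  unfolding independent_def using finite_subset by blast

lemma card_le_indep_num: "independent N E F \<Longrightarrow> card F \<le> indep_num N E"
  unfolding indep_num_def by (rule Max_ge) (auto intro: finite_independent_sets)

lemma indep_num_eqI:
  assumes "independent N E A" "card A = m" "\<And>F. independent N E F \<Longrightarrow> card F \<le> m"
  shows "indep_num N E = m"
  unfolding indep_num_def using assms
  by (intro Max_eqI) (auto intro: finite_independent_sets)

lemma std_monomials_eq_UN:
  "std_monomials N E k = (\<Union>F\<in>{F. independent N E F}. monomials_with_support F k)"
proof (intro equalityI subsetI)
  fix a assume "a \<in> std_monomials N E k"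
  then have out: "\<forall>i. N \<le> i \<longrightarrow> a i = 0" and deg: "(\<Sum>i<N. a i) = k"
    and edge: "\<forall>i<N. \<forall>j<N. E i j \<longrightarrow> a i = 0 \<or> a j = 0"
    by (simp_all add: std_monomials_def)
  define F where "F = {i. a i \<noteq> 0}"
  have "F \<subseteq> {0..<N}"
  proof
    fix i assume "i \<in> F"
    then have "\<not> N \<le> i" using out by (auto simp: F_def)
    then show "i \<in> {0..<N}" by simp
  qed
  moreover have "\<not> E i j" if "i \<in> F" "j \<in> F" for i j
  proof
    assume "E i j"
    moreover have "i < N" "j < N" using that \<open>F \<subseteq> {0..<N}\<close> by auto
    ultimately show False using edge that by (auto simp: F_def)
  qed
  ultimately have "independent N E F" by (simp add: independent_def)
  have "sum a F = sum a {..<N}"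
    using \<open>F \<subseteq> {0..<N}\<close> by (intro sum.mono_neutral_left) (auto simp: F_def)
  with \<open>independent N E F\<close> show "a \<in> (\<Union>F\<in>{F. independent N E F}. monomials_with_support F k)"
    using deg by (auto simp: monomials_with_support_def F_def)
next
  fix a assume "a \<in> (\<Union>F\<in>{F. independent N E F}. monomials_with_support F k)"
  then obtain F where F: "independent N E F" and supp: "{i. a i \<noteq> 0} = F" and deg: "sum a F = k"
    by (auto simp: monomials_with_support_def)
  have "F \<subseteq> {..<N}" using F by (auto simp: independent_def)
  then have "sum a F = sum a {..<N}"
    using supp by (intro sum.mono_neutral_left) auto
  then show "a \<in> std_monomials N E k"
    using F supp deg \<open>F \<subseteq> {..<N}\<close> by (auto simp: std_monomials_def independent_def)
qed

lemma hilbert_series_eq_sum: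
  "hilbert_series N E = (\<Sum>F | independent N E F. support_series F)"
proof (rule fps_ext)
  fix k
  have "card (std_monomials N E k) = (\<Sum>F | independent N E F. card (monomials_with_support F k))"
    unfolding std_monomials_eq_UN
    by (intro card_UN_disjoint finite_independent_sets ballI impI finite_monomials_with_support
        finite_independent) (auto simp: monomials_with_support_def)
  then show "hilbert_series N E $ k = (\<Sum>F | independent N E F. support_series F) $ k"
    by (simp add: hilbert_series_def hilbert_fun_def fps_sum_nth support_series_def)
qed

definition h_poly :: "nat \<Rightarrow> (nat \<Rightarrow> nat \<Rightarrow> bool) \<Rightarrow> int poly" where
  "h_poly N E = (\<Sum>F | independent N E F. monom 1 (card F) * [:1, -1:] ^ (indep_num N E - card F))"

lemma is_h_poly_h_poly: "is_h_poly N E (h_poly N E)"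
proof -
  let ?\<alpha> = "indep_num N E"
  have linear: "fps_of_poly [:1, -1::int:] = 1 - fps_X"
    by (simp add: fps_of_poly_pCons fps_const_neg)
  have "fps_of_poly (h_poly N E)
      = (\<Sum>F | independent N E F. fps_X ^ card F * (1 - fps_X) ^ (?\<alpha> - card F))"
    by (simp add: h_poly_def fps_of_poly_sum fps_of_poly_mult fps_of_poly_power fps_of_poly_monom'
        linear)
  also have "\<dots> = (\<Sum>F | independent N E F. support_series F * (1 - fps_X) ^ ?\<alpha>)"
  proof (rule sum.cong)
    fix F assume "F \<in> {F. independent N E F}"
    then have "finite F" "card F \<le> ?\<alpha>"
      by (simp_all add: finite_independent card_le_indep_num)
    then have "support_series F * (1 - fps_X) ^ ?\<alpha>
        = (support_series F * (1 - fps_X) ^ card F) * (1 - fps_X) ^ (?\<alpha> - card F)"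
      by (simp add: mult.assoc flip: power_add)
    also have "\<dots> = fps_X ^ card F * (1 - fps_X) ^ (?\<alpha> - card F)"
      using \<open>finite F\<close> by (simp add: support_series_mult_power)
    finally show "fps_X ^ card F * (1 - fps_X) ^ (?\<alpha> - card F)
        = support_series F * (1 - fps_X) ^ ?\<alpha>"
      by simp
  qed simp
  also have "\<dots> = hilbert_series N E * (1 - fps_X) ^ ?\<alpha>"
    by (simp add: hilbert_series_eq_sum sum_distrib_right)
  finally show ?thesis unfolding is_h_poly_def .
qed

lemma degree_h_poly_le: "degree (h_poly N E) \<le> indep_num N E"
  unfolding h_poly_def
proof (rule degree_sum_le)
  fix F assume "F \<in> {F. independent N E F}"
  then have "card F \<le> indep_num N E" by (simp add: card_le_indep_num)
  moreover have "degree ([:1, -1::int:] ^ (indep_num N E - card F)) = indep_num N E - card F"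
    by (simp add: degree_power_eq)
  ultimately show
    "degree (monom 1 (card F) * [:1, -1::int:] ^ (indep_num N E - card F)) \<le> indep_num N E"
    by (simp add: degree_mult_eq degree_monom_eq)
qed (rule finite_independent_sets)

definition signed_indep_count :: "nat \<Rightarrow> (nat \<Rightarrow> nat \<Rightarrow> bool) \<Rightarrow> int" where
  "signed_indep_count N E = (\<Sum>F | independent N E F. (-1) ^ card F)"

lemma coeff_h_poly_indep_num:
  "coeff (h_poly N E) (indep_num N E) = (-1) ^ indep_num N E * signed_indep_count N E"
  unfolding h_poly_def signed_indep_count_def coeff_sum sum_distrib_left
proof (rule sum.cong)
  fix F assume "F \<in> {F. independent N E F}"
  then have le: "card F \<le> indep_num N E" by (simp add: card_le_indep_num)
  let ?d = "indep_num N E - card F"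
  have "coeff (monom 1 (card F) * [:1, -1:] ^ ?d) (indep_num N E) = coeff ([:1, -1::int:] ^ ?d) ?d"
    using le by (simp add: coeff_monom_mult)
  also have "\<dots> = lead_coeff ([:1, -1::int:] ^ ?d)"
    by (simp add: degree_power_eq)
  also have "\<dots> = (-1) ^ ?d"
    by (simp add: lead_coeff_power)
  also have "\<dots> = (-1) ^ indep_num N E * (-1) ^ card F"
    using le by (simp flip: neg_one_power_add_eq_neg_one_power_diff power_add)
  finally show "coeff (monom 1 (card F) * [:1, -1::int:] ^ ?d) (indep_num N E)
      = (-1) ^ indep_num N E * (-1) ^ card F" .
qed simp

lemma pseudo_gorenstein_star_iff:
  "pseudo_gorenstein_star N E \<longleftrightarrow> (-1) ^ indep_num N E * signed_indep_count N E = 1"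
proof
  assume "pseudo_gorenstein_star N E"
  then obtain h where "is_h_poly N E h" "lead_coeff h = 1" "degree h = indep_num N E"
    unfolding pseudo_gorenstein_star_def by auto
  moreover from \<open>is_h_poly N E h\<close> have "h = h_poly N E"
    using is_h_poly_h_poly[of N E] by (metis is_h_poly_def fps_of_poly_eq_iff)
  ultimately show "(-1) ^ indep_num N E * signed_indep_count N E = 1"
    by (simp add: coeff_h_poly_indep_num)
next
  assume "(-1) ^ indep_num N E * signed_indep_count N E = 1"
  then have "coeff (h_poly N E) (indep_num N E) = 1" by (simp add: coeff_h_poly_indep_num)
  then have "degree (h_poly N E) = indep_num N E"
    using degree_h_poly_le[of N E] by (simp add: le_antisym le_degree)
  then show "pseudo_gorenstein_star N E"
    using is_h_poly_h_poly \<open>coeff (h_poly N E) (indep_num N E) = 1\<close>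
    unfolding pseudo_gorenstein_star_def by (intro exI[of _ "h_poly N E"]) simp
qed

lemma sum_sign_Un_insert_image:
  assumes "finite \<A>" "finite \<B>" "\<And>F. F \<in> \<A> \<union> \<B> \<Longrightarrow> finite F \<and> x \<notin> F"
  shows "(\<Sum>F \<in> \<B> \<union> insert x ` \<A>. (-1::int) ^ card F)
       = (\<Sum>F\<in>\<B>. (-1) ^ card F) - (\<Sum>F\<in>\<A>. (-1) ^ card F)"
proof -
  have "inj_on (insert x) \<A>"
    using assms(3) by (intro inj_onI) (metis Un_iff insert_ident)
  moreover have "\<B> \<inter> insert x ` \<A> = {}"
    using assms(3) by auto
  ultimately show ?thesis
    using assms by (simp add: sum.union_disjoint sum.reindex sum_negf)
qed

definition path_independent :: "nat \<Rightarrow> nat \<Rightarrow> nat set \<Rightarrow> bool" where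
  "path_independent a b F \<longleftrightarrow> F \<subseteq> {a..<b} \<and> (\<forall>i\<in>F. Suc i \<notin> F)"

lemma finite_path_independent_sets: "finite {F. path_independent a b F}"
  by (rule finite_subset[of _ "Pow {a..<b}"]) (auto simp: path_independent_def)

lemma finite_path_independent: "path_independent a b F \<Longrightarrow> finite F"
  unfolding path_independent_def using finite_subset by blast

lemma path_independent_Suc_Suc:
  assumes "a \<le> b"
  shows "{F. path_independent a (Suc (Suc b)) F}
       = {F. path_independent a (Suc b) F} \<union> insert (Suc b) ` {F. path_independent a b F}"
proof (intro equalityI subsetI)
  fix F assume F: "F \<in> {F. path_independent a (Suc (Suc b)) F}"
  show "F \<in> {F. path_independent a (Suc b) F} \<union> insert (Suc b) ` {F. path_independent a b F}"
  proof (cases "Suc b \<in> F")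
    case False
    then show ?thesis using F by (auto simp: path_independent_def less_Suc_eq)
  next
    case True
    with F have "b \<notin> F" by (auto simp: path_independent_def)
    have "F - {Suc b} \<subseteq> {a..<b}"
    proof
      fix x assume "x \<in> F - {Suc b}"
      with F \<open>b \<notin> F\<close> have "a \<le> x" "x < Suc (Suc b)" "x \<noteq> Suc b" "x \<noteq> b"
        by (auto simp: path_independent_def)
      then show "x \<in> {a..<b}" by simp
    qed
    then have "path_independent a b (F - {Suc b})"
      using F by (auto simp: path_independent_def)
    moreover have "F = insert (Suc b) (F - {Suc b})" using True by auto
    ultimately show ?thesis by blast
  qed
qed (use assms in \<open>auto simp: path_independent_def\<close>)

fun path_signed_count :: "nat \<Rightarrow> int" where
  "path_signed_count 0 = 1"
| "path_signed_count (Suc 0) = 0"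
| "path_signed_count (Suc (Suc m)) = path_signed_count (Suc m) - path_signed_count m"

lemma sum_path_independent:
  "(\<Sum>F | path_independent a (a + m) F. (-1::int) ^ card F) = path_signed_count m"
proof (induction m rule: path_signed_count.induct)
  case 1
  have "{F. path_independent a a F} = {{}}" by (auto simp: path_independent_def)
  then show ?case by simp
next
  case 2
  have "{F. path_independent a (Suc a) F} = {{}, {a}}" by (auto simp: path_independent_def)
  then show ?case by simp
next
  case (3 m)
  have "(\<Sum>F | path_independent a (a + Suc (Suc m)) F. (-1::int) ^ card F)
      = (\<Sum>F | path_independent a (Suc (a + m)) F. (-1) ^ card F)
        - (\<Sum>F | path_independent a (a + m) F. (-1) ^ card F)"
    unfolding add_Suc_right path_independent_Suc_Suc[OF le_add1]
    by (rule sum_sign_Un_insert_image)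
      (auto simp: finite_path_independent_sets finite_path_independent path_independent_def)
  then show ?case using 3 by simp
qed

lemma cycle_edge_iff:
  assumes "n \<ge> 3"
  shows "cycle_edge n i j \<longleftrightarrow> i < n \<and> j < n \<and>
    (j = Suc i \<or> i = Suc j \<or> (i = 0 \<and> j = n - 1) \<or> (i = n - 1 \<and> j = 0))"
  using assms by (auto simp: cycle_edge_def mod_Suc)

lemma independent_cycle_iff:
  assumes "n \<ge> 3"
  shows "independent n (cycle_edge n) F
    \<longleftrightarrow> path_independent 0 n F \<and> \<not> (0 \<in> F \<and> n - 1 \<in> F)"
proof (cases "F \<subseteq> {0..<n}")
  case True
  then have "(\<forall>i\<in>F. \<forall>j\<in>F. \<not> cycle_edge n i j) \<longleftrightarrow>
      (\<forall>i\<in>F. \<forall>j\<in>F.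
        \<not> (j = Suc i \<or> i = Suc j \<or> (i = 0 \<and> j = n - 1) \<or> (i = n - 1 \<and> j = 0)))"
    by (intro ball_cong refl) (auto simp: cycle_edge_iff[OF assms])
  then show ?thesis
    using True unfolding independent_def path_independent_def by blast
qed (simp add: independent_def path_independent_def)

lemma independent_cycle_split:
  "{F. independent (m + 3) (cycle_edge (m + 3)) F}
     = {F. path_independent 0 (m + 2) F} \<union> insert (m + 2) ` {F. path_independent 1 (m + 1) F}"
proof (intro equalityI subsetI)
  fix F assume "F \<in> {F. independent (m + 3) (cycle_edge (m + 3)) F}"
  then have sub: "F \<subseteq> {0..<m + 3}" and gap: "\<forall>i\<in>F. Suc i \<notin> F"
    and ends: "\<not> (0 \<in> F \<and> m + 2 \<in> F)"
    using independent_cycle_iff[of "m + 3" F] by (auto simp: path_independent_def)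
  show "F \<in> {F. path_independent 0 (m + 2) F}
    \<union> insert (m + 2) ` {F. path_independent 1 (m + 1) F}"
  proof (cases "m + 2 \<in> F")
    case False
    have "F \<subseteq> {0..<m + 2}"
    proof
      fix i assume "i \<in> F"
      with sub False have "i < m + 3" "i \<noteq> m + 2" by auto
      then show "i \<in> {0..<m + 2}" by simp
    qed
    then show ?thesis using gap by (simp add: path_independent_def)
  next
    case True
    with gap ends have "0 \<notin> F" "m + 1 \<notin> F" by auto
    have "F - {m + 2} \<subseteq> {1..<m + 1}"
    proof
      fix i assume "i \<in> F - {m + 2}"
      with sub have "i < m + 3" "i \<noteq> m + 2" by auto
      moreover have "i \<noteq> m + 1" "i \<noteq> 0"
        using \<open>i \<in> F - {m + 2}\<close> \<open>0 \<notin> F\<close> \<open>m + 1 \<notin> F\<close> by (metis DiffD1)+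
      ultimately show "i \<in> {1..<m + 1}" by simp
    qed
    then have "path_independent 1 (m + 1) (F - {m + 2})" using gap by (simp add: path_independent_def)
    moreover have "F = insert (m + 2) (F - {m + 2})" using True by auto
    ultimately show ?thesis by blast
  qed
next
  fix F
  assume "F \<in> {F. path_independent 0 (m + 2) F}
    \<union> insert (m + 2) ` {F. path_independent 1 (m + 1) F}"
  then show "F \<in> {F. independent (m + 3) (cycle_edge (m + 3)) F}"
    by (auto simp: independent_cycle_iff path_independent_def)
qed

lemma signed_indep_count_cycle:
  "signed_indep_count (m + 3) (cycle_edge (m + 3)) = path_signed_count (m + 2) - path_signed_count m"
proof -
  have "signed_indep_count (m + 3) (cycle_edge (m + 3))
      = (\<Sum>F | path_independent 0 (m + 2) F. (-1) ^ card F)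
        - (\<Sum>F | path_independent 1 (m + 1) F. (-1) ^ card F)"
    unfolding signed_indep_count_def independent_cycle_split
    by (rule sum_sign_Un_insert_image)
      (auto simp: finite_path_independent_sets finite_path_independent path_independent_def)
  then show ?thesis
    using sum_path_independent[of 0 "m + 2"] sum_path_independent[of 1 m] by simp
qed

lemma card_independent_cycle_le:
  assumes "independent n (cycle_edge n) F"
  shows "2 * card F \<le> n"
proof -
  define succ where "succ i = Suc i mod n" for i
  have sub: "F \<subseteq> {0..<n}"
    and no_edge: "\<And>i j. i \<in> F \<Longrightarrow> j \<in> F \<Longrightarrow> \<not> cycle_edge n i j"
    using assms by (auto simp: independent_def)
  have "inj_on succ {0..<n}"
    by (auto simp: inj_on_def succ_def mod_Suc split: if_splits)
  then have "card (succ ` F) = card F"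
    using sub by (meson card_image inj_on_subset)
  moreover have "F \<inter> succ ` F = {}"
  proof (intro equals0I)
    fix j assume "j \<in> F \<inter> succ ` F"
    then obtain i where "i \<in> F" "j \<in> F" "j = succ i" by auto
    moreover then have "cycle_edge n i j" using sub by (auto simp: cycle_edge_def succ_def)
    ultimately show False using no_edge by blast
  qed
  moreover have "F \<union> succ ` F \<subseteq> {0..<n}"
    using sub by (auto simp: succ_def)
  then have "card (F \<union> succ ` F) \<le> n"
    using card_mono[of "{0..<n}"] by fastforce
  ultimately show ?thesis
    using sub by (simp add: card_Un_disjoint finite_subset)
qed

lemma indep_num_cycle: "indep_num n (cycle_edge n) = n div 2"
proof (rule indep_num_eqI)
  define W where "W = (\<lambda>a. 2 * a) ` {..<n div 2}"
  have succ_even: "Suc (2 * a) mod n = Suc (2 * a)" if "a < n div 2" for a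
    using that by (intro mod_less) presburger
  have "W \<subseteq> {0..<n}" unfolding W_def by auto
  moreover have "\<not> cycle_edge n i j" if "i \<in> W" "j \<in> W" for i j
    using that succ_even unfolding W_def cycle_edge_def by auto presburger+
  ultimately show "independent n (cycle_edge n) W"
    by (simp add: independent_def)
  show "card W = n div 2" unfolding W_def by (simp add: card_image inj_on_def)
qed (use card_independent_cycle_le in fastforce)

lemma path_signed_count_add_6: "path_signed_count (m + 6) = path_signed_count m"
  by (simp add: eval_nat_numeral)

lemma path_signed_count_values:
  "path_signed_count 0 = 1" "path_signed_count 1 = 0" "path_signed_count 2 = -1"
  "path_signed_count 3 = -1" "path_signed_count 4 = 0" "path_signed_count 5 = 1"
  by (simp_all add: eval_nat_numeral)

lemma periodic_mod:
  fixes f :: "nat \<Rightarrow> 'a" and p :: nat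
  assumes "\<And>m. f (m + p) = f m"
  shows "f m = f (m mod p)"
proof -
  have "f (r + p * q) = f r" for r q
  proof (induction q)
    case (Suc q)
    have "f (r + p * Suc q) = f ((r + p * q) + p)" by (simp add: ac_simps)
    also have "\<dots> = f r" using Suc.IH by (simp only: assms)
    finally show ?case .
  qed simp
  then show ?thesis using mod_mult_div_eq[of m p] by metis
qed

lemma cycle_sign_eq_one_iff_mod_12:
  "(-1::int) ^ ((m + 3) div 2) * (path_signed_count (m + 2) - path_signed_count m) = 1
     \<longleftrightarrow> (m + 3) mod 12 \<in> {1, 2, 5, 10}" (is "?P m")
proof -
  have "?P (m + 12) = ?P m" for m
  proof -
    have "(m + 12 + 3) div 2 = (m + 3) div 2 + 6" "m + 12 + 2 = (m + 2) + 6 + 6"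
      "m + 12 = m + 6 + 6"
      by simp_all
    moreover have "(m + 12 + 3) mod 12 = (m + 3) mod 12" by presburger
    ultimately show ?thesis by (simp only: path_signed_count_add_6 power_add) simp
  qed
  then have "?P m = ?P (m mod 12)" by (rule periodic_mod)
  moreover have "?P r" if "r < 12" for r
  proof -
    have "r \<in> {0, 1, 2, 3, 4, 5, 6, 7, 8, 9, 10, 11}"
      using that by (simp add: eval_nat_numeral less_Suc_eq)
    moreover have "path_signed_count (r + 2) = path_signed_count ((r + 2) mod 6)"
      "path_signed_count r = path_signed_count (r mod 6)"
      by (intro periodic_mod path_signed_count_add_6)+
    ultimately show ?thesis by (auto simp: path_signed_count_values)
  qed
  ultimately show ?thesis by simp
qed

theorem theorem2p3:
  fixes n :: nat
  assumes "n \<ge> 3"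
  shows "pseudo_gorenstein_star n (cycle_edge n) \<longleftrightarrow> n mod 12 \<in> {1, 2, 5, 10}"
proof -
  obtain m where n: "n = m + 3"
    using assms by (metis add.commute le_Suc_ex)
  have "pseudo_gorenstein_star n (cycle_edge n)
      \<longleftrightarrow> (-1) ^ indep_num n (cycle_edge n) * signed_indep_count n (cycle_edge n) = 1"
    by (rule pseudo_gorenstein_star_iff)
  also have "\<dots> \<longleftrightarrow> (-1) ^ ((m + 3) div 2) * (path_signed_count (m + 2) - path_signed_count m) = 1"
    by (simp only: n indep_num_cycle signed_indep_count_cycle)
  also have "\<dots> \<longleftrightarrow> (m + 3) mod 12 \<in> {1, 2, 5, 10}"
    by (rule cycle_sign_eq_one_iff_mod_12)
  finally show ?thesis by (simp only: n)
qed

end
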